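(* Let $Z$ be a real Banach space and $f:Z\to\mathbb{R}$ a continuous convex function. For $z\in Z$ and $\xi\in\partial f(z)$ define $$Y(f,z,\xi)=\{v\in Z: f(z+tv)-f(z)-\langle\xi,tv\rangle=0 \text{ for all } t\in\mathbb{R}\}.$$ Then for all $z_1,z_2\in Z$, $\xi_1\in\partial f(z_1)$, $\xi_2\in\partial f(z_2)$: (1) $Y(f,z_1,\xi_1)$ is a closed linear subspace of $Z$; (2) $Y(f,z_1,\xi_1)=Y(f,z_2,\xi_2)$; (3) $f(z_1+v)=f(z_1)+\langle\xi_1,v\rangle$ for all $v\in Y(f,z_1,\xi_1)$; (4) $\langle\xi_2-\xi_1,v\rangle=0$ for all $v\in Y(f,z_1,\xi_1)$.
   Context: $\partial f(x)=\{\xi\in Z^*: f(y)\ge f(x)+\langle\xi,y-x\rangle \text{ for all } y\in Z\}$. *)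

theory Defs
  imports "HOL-Analysis.Analysis"
begin

definition subdifferential :: "('a::real_normed_vector \<Rightarrow> real) \<Rightarrow> 'a \<Rightarrow> ('a \<Rightarrow>\<^sub>L real) set" where
  "subdifferential f x = {\<xi>. \<forall>y. f y \<ge> f x + blinfun_apply \<xi> (y - x)}"

definition Yset :: "('a::real_normed_vector \<Rightarrow> real) \<Rightarrow> 'a \<Rightarrow> ('a \<Rightarrow>\<^sub>L real) \<Rightarrow> 'a set" where
  "Yset f z \<xi> = {v. \<forall>t::real. f (z + t *\<^sub>R v) - f z - blinfun_apply \<xi> (t *\<^sub>R v) = 0}"

end

theory Submission
  imports Defs
begin

text \<open>If a convex function f is affine on one line z + \<real>v, it is affine with the same slope on
  every parallel line: y + tv is a convex combination of a point near y and the far-away point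
  z + (t/s)v of the original line, and letting s \<rightarrow> 0 with f continuous at y gives
  f(y + tv) \<le> f y + t c; applying this with -t at y + tv gives the reverse inequality.
  Hence Y(f,z,\<xi>) is the set of directions along which f is globally affine with slope \<xi>,
  which is visibly a closed subspace independent of z.  A subgradient \<xi>' at any point must
  then agree with \<xi> on these directions, since a linear function below an affine function
  on a whole line has the same slope.\<close>

definition affine_directions :: "('a::real_normed_vector \<Rightarrow> real) \<Rightarrow> ('a \<Rightarrow>\<^sub>L real) \<Rightarrow> 'a set"
  where "affine_directions f \<xi> = {v. \<forall>y t. f (y + t *\<^sub>R v) = f y + t * \<xi> v}"

lemma Yset_iff:
  "v \<in> Yset f z \<xi> \<longleftrightarrow> (\<forall>t. f (z + t *\<^sub>R v) = f z + t * \<xi> v)"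
  by (auto simp: Yset_def blinfun.scaleR_right algebra_simps)

lemma convex_on_affine_line_le:
  fixes f :: "'a::real_normed_vector \<Rightarrow> real"
  assumes cvx: "convex_on UNIV f" and cont: "isCont f y"
    and line: "\<And>r. f (z + r *\<^sub>R v) = f z + r * c"
  shows "f (y + t *\<^sub>R v) \<le> f y + t * c"
proof -
  define a where "a s = (1 / (1 - s)) *\<^sub>R (y - s *\<^sub>R z)" for s :: real
  have "\<forall>\<^sub>F s in at_right 0. 0 < s \<and> s < (1::real)"
    using eventually_at_right_real[of 0 1] eventually_at_right_less[of 0]
    by (auto elim: eventually_elim2)
  then have bound: "\<forall>\<^sub>F s in at_right 0. f (y + t *\<^sub>R v) \<le> (1 - s) * f (a s) + s * f z + t * c"
  proof (rule eventually_mono)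
    fix s :: real assume s: "0 < s \<and> s < 1"
    have "y + t *\<^sub>R v = (1 - s) *\<^sub>R a s + s *\<^sub>R (z + (t / s) *\<^sub>R v)"
      using s by (simp add: a_def scaleR_right_distrib)
    also have "f \<dots> \<le> (1 - s) * f (a s) + s * f (z + (t / s) *\<^sub>R v)"
      using s by (intro convex_onD[OF cvx]) auto
    also have "s * f (z + (t / s) *\<^sub>R v) = s * f z + t * c"
      using s by (simp add: line algebra_simps)
    finally show "f (y + t *\<^sub>R v) \<le> (1 - s) * f (a s) + s * f z + t * c"
      by simp
  qed
  have "(a \<longlongrightarrow> (1 / (1 - 0)) *\<^sub>R (y - 0 *\<^sub>R z)) (at_right 0)"
    unfolding a_def by (intro tendsto_intros) auto
  then have "((\<lambda>s. f (a s)) \<longlongrightarrow> f y) (at_right 0)"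
    using isCont_tendsto_compose[OF cont] by simp
  then have "((\<lambda>s. (1 - s) * f (a s) + s * f z + t * c) \<longlongrightarrow> (1 - 0) * f y + 0 * f z + t * c)
      (at_right 0)"
    by (intro tendsto_intros)
  then show ?thesis
    by (intro tendsto_le[OF trivial_limit_at_right_real _ tendsto_const bound]) simp
qed

lemma convex_on_affine_line_parallel:
  fixes f :: "'a::real_normed_vector \<Rightarrow> real"
  assumes cvx: "convex_on UNIV f" and cont: "continuous_on UNIV f"
    and line: "\<And>r. f (z + r *\<^sub>R v) = f z + r * c"
  shows "f (y + t *\<^sub>R v) = f y + t * c"
proof -
  have "\<And>x. isCont f x"
    using cont by (simp add: continuous_on_eq_continuous_at)
  then have "f ((y + t *\<^sub>R v) + (- t) *\<^sub>R v) \<le> f (y + t *\<^sub>R v) + (- t) * c"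
    by (rule convex_on_affine_line_le[OF cvx _ line])
  moreover have "f (y + t *\<^sub>R v) \<le> f y + t * c"
    by (rule convex_on_affine_line_le[OF cvx \<open>isCont f y\<close> line])
  ultimately show ?thesis
    by simp
qed

lemma Yset_eq_affine_directions:
  fixes f :: "'a::real_normed_vector \<Rightarrow> real"
  assumes "convex_on UNIV f" and "continuous_on UNIV f"
  shows "Yset f z \<xi> = affine_directions f \<xi>"
proof (intro set_eqI iffI)
  fix v
  assume "v \<in> Yset f z \<xi>"
  then have "f (z + r *\<^sub>R v) = f z + r * \<xi> v" for r
    by (simp add: Yset_iff)
  then show "v \<in> affine_directions f \<xi>"
    unfolding affine_directions_def
    using convex_on_affine_line_parallel[OF assms, of z v] by blast
next
  fix v
  assume "v \<in> affine_directions f \<xi>"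
  then show "v \<in> Yset f z \<xi>"
    unfolding affine_directions_def Yset_iff by blast
qed

lemma subspace_affine_directions: "subspace (affine_directions f \<xi>)"
  unfolding subspace_def affine_directions_def
proof (intro conjI ballI allI CollectI)
  fix u w y and t :: real
  assume "u \<in> {v. \<forall>y t. f (y + t *\<^sub>R v) = f y + t * \<xi> v}"
    and "w \<in> {v. \<forall>y t. f (y + t *\<^sub>R v) = f y + t * \<xi> v}"
  then have "f ((y + t *\<^sub>R u) + t *\<^sub>R w) = f y + t * \<xi> u + t * \<xi> w"
    by simp
  then show "f (y + t *\<^sub>R (u + w)) = f y + t * \<xi> (u + w)"
    by (simp add: blinfun.add_right algebra_simps)
next
  fix c :: real and u y and t :: real
  assume "u \<in> {v. \<forall>y t. f (y + t *\<^sub>R v) = f y + t * \<xi> v}"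
  then have "f (y + (t * c) *\<^sub>R u) = f y + (t * c) * \<xi> u"
    by blast
  then show "f (y + t *\<^sub>R (c *\<^sub>R u)) = f y + t * \<xi> (c *\<^sub>R u)"
    by (simp add: blinfun.scaleR_right)
qed simp

lemma closed_affine_directions:
  assumes "continuous_on UNIV f"
  shows "closed (affine_directions f \<xi>)"
proof -
  have "affine_directions f \<xi> = (\<Inter>y. \<Inter>t. {v. f (y + t *\<^sub>R v) = f y + t * \<xi> v})"
    by (auto simp: affine_directions_def)
  also have "closed \<dots>"
    by (intro closed_INT ballI closed_Collect_eq continuous_intros
        continuous_on_compose2[OF assms]) auto
  finally show ?thesis .
qed

lemma subdifferential_agrees_on_affine_directions:
  assumes sub: "\<xi>' \<in> subdifferential f z" and v: "v \<in> affine_directions f \<xi>"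
  shows "\<xi>' v = \<xi> v"
proof -
  have "f z + t * \<xi>' v \<le> f z + t * \<xi> v" for t
  proof -
    have "f z + \<xi>' ((z + t *\<^sub>R v) - z) \<le> f (z + t *\<^sub>R v)"
      using sub unfolding subdifferential_def by blast
    then show ?thesis
      using v by (simp add: affine_directions_def blinfun.scaleR_right)
  qed
  from this[of 1] this[of "-1"] show ?thesis
    by simp
qed

lemma affine_directions_eq:
  assumes "\<xi>1 \<in> subdifferential f z1" and "\<xi>2 \<in> subdifferential f z2"
  shows "affine_directions f \<xi>1 = affine_directions f \<xi>2"
proof -
  have incl: "affine_directions f \<xi> \<subseteq> affine_directions f \<xi>'"
    if "\<xi>' \<in> subdifferential f z" for \<xi> \<xi>' and z
  proof
    fix v
    assume v: "v \<in> affine_directions f \<xi>"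
    then have "\<xi>' v = \<xi> v"
      by (rule subdifferential_agrees_on_affine_directions[OF that])
    with v show "v \<in> affine_directions f \<xi>'"
      by (simp add: affine_directions_def)
  qed
  show ?thesis
    by (rule subset_antisym[OF incl[OF assms(2)] incl[OF assms(1)]])
qed

theorem mainTheorem4:
  fixes f :: "'a::banach \<Rightarrow> real"
    and z1 z2 :: 'a and \<xi>1 \<xi>2 :: "'a \<Rightarrow>\<^sub>L real"
  assumes "continuous_on UNIV f"
    and "convex_on UNIV f"
    and "\<xi>1 \<in> subdifferential f z1"
    and "\<xi>2 \<in> subdifferential f z2"
  shows "(subspace (Yset f z1 \<xi>1) \<and> closed (Yset f z1 \<xi>1))
    \<and> Yset f z1 \<xi>1 = Yset f z2 \<xi>2
    \<and> (\<forall>v \<in> Yset f z1 \<xi>1. f (z1 + v) = f z1 + blinfun_apply \<xi>1 v)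
    \<and> (\<forall>v \<in> Yset f z1 \<xi>1. blinfun_apply (\<xi>2 - \<xi>1) v = 0)"
proof -
  have Y: "Yset f z \<xi> = affine_directions f \<xi>" for z \<xi>
    using Yset_eq_affine_directions[OF assms(2,1)] .
  have "f (z1 + v) = f z1 + \<xi>1 v" if "v \<in> affine_directions f \<xi>1" for v
  proof -
    from that have "f (z1 + 1 *\<^sub>R v) = f z1 + 1 * \<xi>1 v"
      unfolding affine_directions_def by blast
    then show ?thesis
      by simp
  qed
  moreover have "(\<xi>2 - \<xi>1) v = 0" if "v \<in> affine_directions f \<xi>1" for v
    using subdifferential_agrees_on_affine_directions[OF assms(4) that]
    by (simp add: minus_blinfun.rep_eq)
  ultimately show ?thesis
    unfolding Y
    using subspace_affine_directions closed_affine_directions[OF assms(1)]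
      affine_directions_eq[OF assms(3,4)]
    by simp
qed

end
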